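(* Under the setup below, fix $K=(k_1,\dots,k_r)$. Let $C_K(y)$ be the matrix with rows indexed by multi-indices $\beta\in\mathbb N^r$ of degree $1$ and columns indexed by pairs $(\gamma,L)$, where $\gamma\in\mathbb N^r$ has degree $r-1$ and $L$ ranges over ordered $r$-tuples of distinct elements of $[d]$, with entries $C_K(y)_{\beta,(\gamma,L)}=D_{\beta+\gamma,L}(y)$. Then all $2\times2$ minors of $C_K(y)$ are homogeneous polynomials of degree $2r$ vanishing on the attention variety.
   Context: Setup: $d'=1$, $t>1$, $Q,K\in\mathbb R^{a\times d}$, $V\in\mathbb R^{1\times d}$ with row $v$, $A=K^\top Q$, $\varphi_W(X)=VX(X^\top AX)$, $X=(x_{kn})\in\mathbb R^{d\times t}$; fix $j\in[t]$, $n\ne j$, and $2\le r\le\min(a,d)$; $k_1,\dots,k_r$ are distinct elements of $[d]$. $y_{n,j}(\mathcal A,b)$ denotes the coefficient of $(\prod_{u\in\mathcal A}x_{un})x_{bj}$ in $\varphi_W(X)[1,j]$ divided by the number of distinct orderings of the size-2 multiset $\mathcal A$; $\omega(u,w)=1$ if $u=w$, $2$ otherwise. For $\alpha\in\mathbb N^r$ with $|\alpha|=r$, choose $f:[r]\to[r]$ with $|f^{-1}(m)|=\alpha_m$ whose only directed cycles are fixed points, and for a tuple $L=(l_1,\dots,l_r)$ of distinct indices set $D_{\alpha,L}(y)=\det\big(\omega(k_{f(p)},k_p)\,y_{n,j}(\{k_{f(p)},k_p\},l_q)\big)_{p,q=1}^r$; on $\mu(W)$ this equals $(\prod_m v_{k_m}^{\alpha_m})\det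 A_{K,L}$. $\mu$ maps $W$ to all scaled coefficients; the attention variety is the Zariski closure of $\operatorname{im}\mu$. *)

theory Defs
  imports "HOL-Library.Poly_Mapping" "HOL-Combinatorics.Multiset_Permutations"
          "Jordan_Normal_Form.Determinant"
begin

(* Indices are 0-based: [d] = {..<d}, [t] = {..<t}, [r] = {..<r}, [a] = {..<a}. *)

type_synonym 'v rpoly = "('v \<Rightarrow>\<^sub>0 nat) \<Rightarrow>\<^sub>0 real"

definition pvar :: "'v \<Rightarrow> 'v rpoly" where
  "pvar i = Poly_Mapping.single (Poly_Mapping.single i 1) 1"

definition pconst :: "real \<Rightarrow> 'v rpoly" where
  "pconst c = Poly_Mapping.single 0 c"

definition peval :: "'v rpoly \<Rightarrow> ('v \<Rightarrow> real) \<Rightarrow> real" where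
  "peval p y = (\<Sum>m\<in>Poly_Mapping.keys p. Poly_Mapping.lookup p m * (\<Prod>i\<in>Poly_Mapping.keys m. y i ^ Poly_Mapping.lookup m i))"

definition homogeneous_poly :: "nat \<Rightarrow> 'v rpoly \<Rightarrow> bool" where
  "homogeneous_poly D p \<longleftrightarrow> (\<forall>m\<in>Poly_Mapping.keys p. (\<Sum>i\<in>Poly_Mapping.keys m. Poly_Mapping.lookup m i) = D)"

definition zariski_closure :: "('v \<Rightarrow> real) set \<Rightarrow> ('v \<Rightarrow> real) set" where
  "zariski_closure S = {y. \<forall>p :: 'v rpoly. (\<forall>z\<in>S. peval p z = 0) \<longrightarrow> peval p y = 0}"

definition Amat :: "nat \<Rightarrow> (nat \<Rightarrow> nat \<Rightarrow> real) \<Rightarrow> (nat \<Rightarrow> nat \<Rightarrow> real) \<Rightarrow> nat \<Rightarrow> nat \<Rightarrow> real" where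
  "Amat a Q K u b = (\<Sum>i<a. K i u * Q i b)"

(* phi_W(X)[1,j] = sum_n (V X)_n (X^T A X)_{n j}, as a polynomial in the variables x_{kn} = pvar (k,n) *)
definition phi_poly :: "nat \<Rightarrow> nat \<Rightarrow> nat \<Rightarrow> (nat \<Rightarrow> nat \<Rightarrow> real) \<Rightarrow> (nat \<Rightarrow> nat \<Rightarrow> real)
    \<Rightarrow> (nat \<Rightarrow> real) \<Rightarrow> nat \<Rightarrow> (nat \<times> nat) rpoly" where
  "phi_poly a d t Q K v j =
     (\<Sum>n<t. (\<Sum>k<d. pconst (v k) * pvar (k, n)) *
             (\<Sum>u<d. \<Sum>b<d. pvar (u, n) * pconst (Amat a Q K u b) * pvar (b, j)))"

definition outside_col :: "nat \<Rightarrow> ((nat \<times> nat) \<Rightarrow>\<^sub>0 nat) \<Rightarrow> nat multiset" where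
  "outside_col j m = (\<Sum>x\<in>{x\<in>Poly_Mapping.keys m. snd x \<noteq> j}. replicate_mset (Poly_Mapping.lookup m x) (fst x))"

(* coordinates of the ambient space: pairs (j, monomial in the x_{kn}) *)
type_synonym coord = "nat \<times> ((nat \<times> nat) \<Rightarrow>\<^sub>0 nat)"

definition mu :: "nat \<Rightarrow> nat \<Rightarrow> nat \<Rightarrow> (nat \<Rightarrow> nat \<Rightarrow> real) \<Rightarrow> (nat \<Rightarrow> nat \<Rightarrow> real)
    \<Rightarrow> (nat \<Rightarrow> real) \<Rightarrow> coord \<Rightarrow> real" where
  "mu a d t Q K v c = (case c of (j, m) \<Rightarrow>
     if j < t then Poly_Mapping.lookup (phi_poly a d t Q K v j) m
                   / real (card (permutations_of_multiset (outside_col j m)))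
     else 0)"

definition attention_variety :: "nat \<Rightarrow> nat \<Rightarrow> nat \<Rightarrow> (coord \<Rightarrow> real) set" where
  "attention_variety a d t = zariski_closure {mu a d t Q K v | Q K v. True}"

(* coordinate y_{n,j}({u,w}, b): coefficient of x_{un} x_{wn} x_{bj} *)
definition ycoord :: "nat \<Rightarrow> nat \<Rightarrow> nat \<Rightarrow> nat \<Rightarrow> nat \<Rightarrow> coord" where
  "ycoord n j u w b = (j, Poly_Mapping.single (u, n) 1 + Poly_Mapping.single (w, n) 1
                          + Poly_Mapping.single (b, j) 1)"

definition omega :: "nat \<Rightarrow> nat \<Rightarrow> real" where
  "omega u w = (if u = w then 1 else 2)"

definition multi_index :: "nat \<Rightarrow> nat \<Rightarrow> (nat \<Rightarrow> nat) \<Rightarrow> bool" where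
  "multi_index r s \<alpha> \<longleftrightarrow> (\<forall>m\<ge>r. \<alpha> m = 0) \<and> (\<Sum>m<r. \<alpha> m) = s"

definition admissible_f :: "nat \<Rightarrow> (nat \<Rightarrow> nat) \<Rightarrow> (nat \<Rightarrow> nat) \<Rightarrow> bool" where
  "admissible_f r \<alpha> f \<longleftrightarrow>
     (\<forall>p<r. f p < r) \<and>
     (\<forall>m<r. card {p\<in>{..<r}. f p = m} = \<alpha> m) \<and>
     (\<forall>p<r. \<forall>i\<ge>1. (f ^^ i) p = p \<longrightarrow> f p = p)"

definition distinct_tuple :: "nat \<Rightarrow> nat \<Rightarrow> (nat \<Rightarrow> nat) \<Rightarrow> bool" where
  "distinct_tuple d r L \<longleftrightarrow> (\<forall>q<r. L q < d) \<and> inj_on L {..<r}"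

definition Dval :: "nat \<Rightarrow> (nat \<Rightarrow> nat) \<Rightarrow> nat \<Rightarrow> nat \<Rightarrow> (nat \<Rightarrow> nat) \<Rightarrow> (nat \<Rightarrow> nat)
    \<Rightarrow> (coord \<Rightarrow> real) \<Rightarrow> real" where
  "Dval r k n j f L y = det (mat r r (\<lambda>(p, q).
      omega (k (f p)) (k p) * y (ycoord n j (k (f p)) (k p) (L q))))"

definition CK :: "nat \<Rightarrow> (nat \<Rightarrow> nat) \<Rightarrow> nat \<Rightarrow> nat \<Rightarrow> ((nat \<Rightarrow> nat) \<Rightarrow> nat \<Rightarrow> nat)
    \<Rightarrow> (nat \<Rightarrow> nat) \<Rightarrow> (nat \<Rightarrow> nat) \<Rightarrow> (nat \<Rightarrow> nat) \<Rightarrow> (coord \<Rightarrow> real) \<Rightarrow> real" where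
  "CK r k n j F \<beta> \<gamma> L y = Dval r k n j (F (\<lambda>m. \<beta> m + \<gamma> m)) L y"

end

(* At a point mu(W) of the parametrisation, omega(u,w) y_{n,j}({u,w},b) equals
   v_u A_{wb} + v_w A_{ub}, with the second term absent when u = w.  So row p of the matrix
   defining D_{alpha,L} is v_{k_f(p)} times row k_p of A_{K,L} plus v_{k_p} times row k_f(p),
   the latter only when f(p) <> p.  Expanding the determinant multilinearly in the rows, every
   term that uses a second summand on a nonempty set X of rows has two equal rows: otherwise the
   map that is f on X and the identity off X would be a permutation, making some p in X periodic
   under f, and f has no cycles except fixed points.  Hence D_{alpha,L}(mu(W)) =
   v_K^alpha det A_{K,L}, so C_K(mu(W)) has entries v_K^beta (v_K^gamma det A_{K,L}) and rank at
   most one.  Its 2x2 minors, products of two determinants of r x r matrices of linear forms, are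
   homogeneous of degree 2r and vanish on the image of mu, hence on its Zariski closure. *)

theory Submission
  imports Defs "HOL-Combinatorics.Cycles"
begin

section \<open>Evaluation of polynomials\<close>

definition monomial_eval :: "('v \<Rightarrow>\<^sub>0 nat) \<Rightarrow> ('v \<Rightarrow> real) \<Rightarrow> real" where
  "monomial_eval m y = (\<Prod>i\<in>Poly_Mapping.keys m. y i ^ Poly_Mapping.lookup m i)"

lemma monomial_eval_superset:
  assumes "finite S" "Poly_Mapping.keys m \<subseteq> S"
  shows "monomial_eval m y = (\<Prod>i\<in>S. y i ^ Poly_Mapping.lookup m i)"
  unfolding monomial_eval_def using assms
  by (intro prod.mono_neutral_left) (auto simp: in_keys_iff)

lemma monomial_eval_add: "monomial_eval (m1 + m2) y = monomial_eval m1 y * monomial_eval m2 y"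
proof -
  let ?S = "Poly_Mapping.keys m1 \<union> Poly_Mapping.keys m2"
  have "monomial_eval (m1 + m2) y = (\<Prod>i\<in>?S. y i ^ Poly_Mapping.lookup (m1 + m2) i)"
    by (rule monomial_eval_superset) (use keys_add[of m1 m2] in auto)
  also have "\<dots> = (\<Prod>i\<in>?S. y i ^ Poly_Mapping.lookup m1 i) * (\<Prod>i\<in>?S. y i ^ Poly_Mapping.lookup m2 i)"
    by (simp add: lookup_add power_add prod.distrib)
  finally show ?thesis
    by (simp add: monomial_eval_superset[of ?S m1] monomial_eval_superset[of ?S m2])
qed

lemma peval_superset:
  assumes "finite S" "Poly_Mapping.keys p \<subseteq> S"
  shows "peval p y = (\<Sum>m\<in>S. Poly_Mapping.lookup p m * monomial_eval m y)"
  unfolding peval_def monomial_eval_def using assms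
  by (intro sum.mono_neutral_left) (auto simp: in_keys_iff)

lemma peval_add: "peval (p + q) y = peval p y + peval q y"
proof -
  let ?S = "Poly_Mapping.keys p \<union> Poly_Mapping.keys q"
  have "peval (p + q) y = (\<Sum>m\<in>?S. Poly_Mapping.lookup (p + q) m * monomial_eval m y)"
    by (rule peval_superset) (use keys_add[of p q] in auto)
  also have "\<dots> = (\<Sum>m\<in>?S. Poly_Mapping.lookup p m * monomial_eval m y)
                 + (\<Sum>m\<in>?S. Poly_Mapping.lookup q m * monomial_eval m y)"
    by (simp add: lookup_add distrib_right sum.distrib)
  finally show ?thesis
    by (simp add: peval_superset[of ?S p] peval_superset[of ?S q])
qed

lemma peval_zero [simp]: "peval 0 y = 0"
  by (simp add: peval_def)

lemma peval_one [simp]: "peval 1 y = 1"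
  by (simp add: peval_def)

lemma peval_single: "peval (Poly_Mapping.single m c) y = c * monomial_eval m y"
  by (subst peval_superset[of "{m}"]) auto

lemma peval_sum: "peval (\<Sum>i\<in>A. f i) y = (\<Sum>i\<in>A. peval (f i) y)"
  by (induction A rule: infinite_finite_induct) (auto simp: peval_add)

lemma poly_mapping_sum_singles:
  "p = (\<Sum>m\<in>Poly_Mapping.keys p. Poly_Mapping.single m (Poly_Mapping.lookup p m))"
  by (rule poly_mapping_eqI) (auto simp: lookup_sum lookup_single when_def in_keys_iff)

lemma peval_mult: "peval (p * q) y = peval p y * peval q y"
proof -
  have "p * q = (\<Sum>a\<in>Poly_Mapping.keys p. \<Sum>b\<in>Poly_Mapping.keys q.
      Poly_Mapping.single a (Poly_Mapping.lookup p a) * Poly_Mapping.single b (Poly_Mapping.lookup q b))"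
    by (subst poly_mapping_sum_singles[of p], subst poly_mapping_sum_singles[of q])
       (simp add: sum_product)
  then have "peval (p * q) y = (\<Sum>a\<in>Poly_Mapping.keys p. \<Sum>b\<in>Poly_Mapping.keys q.
      (Poly_Mapping.lookup p a * monomial_eval a y) * (Poly_Mapping.lookup q b * monomial_eval b y))"
    by (simp add: peval_sum mult_single peval_single monomial_eval_add ac_simps)
  also have "\<dots> = peval p y * peval q y"
    by (simp add: peval_def monomial_eval_def sum_product)
  finally show ?thesis .
qed

interpretation peval: comm_ring_hom "\<lambda>p :: 'v rpoly. peval p y" for y
  by unfold_locales (simp_all add: peval_add peval_mult)

lemma peval_pconst [simp]: "peval (pconst c) y = c"
  by (simp add: pconst_def peval_single monomial_eval_def)

lemma peval_pvar [simp]: "peval (pvar i) y = y i"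
  by (simp add: pvar_def peval_single monomial_eval_def)

section \<open>Homogeneous polynomials\<close>

definition monomial_degree :: "('v \<Rightarrow>\<^sub>0 nat) \<Rightarrow> nat" where
  "monomial_degree m = (\<Sum>i\<in>Poly_Mapping.keys m. Poly_Mapping.lookup m i)"

lemma homogeneous_poly_iff:
  "homogeneous_poly D p \<longleftrightarrow> (\<forall>m\<in>Poly_Mapping.keys p. monomial_degree m = D)"
  by (simp add: homogeneous_poly_def monomial_degree_def)

lemma monomial_degree_add: "monomial_degree (m1 + m2) = monomial_degree m1 + monomial_degree m2"
  unfolding monomial_degree_def by (rule setsum_keys_plus_distrib) auto

lemma homogeneous_poly_zero: "homogeneous_poly D 0"
  by (simp add: homogeneous_poly_iff)

lemma homogeneous_poly_one: "homogeneous_poly 0 1"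
  by (simp add: homogeneous_poly_iff monomial_degree_def)

lemma homogeneous_poly_of_int: "homogeneous_poly 0 (of_int z :: 'v rpoly)"
  by (auto simp: homogeneous_poly_iff monomial_degree_def in_keys_iff lookup_of_int when_def
           split: if_splits)

lemma homogeneous_poly_add:
  "homogeneous_poly D p \<Longrightarrow> homogeneous_poly D q \<Longrightarrow> homogeneous_poly D (p + q)"
  unfolding homogeneous_poly_iff using keys_add[of p q] by blast

lemma homogeneous_poly_diff:
  "homogeneous_poly D p \<Longrightarrow> homogeneous_poly D q \<Longrightarrow> homogeneous_poly D (p - q)"
  using homogeneous_poly_add[of D p "- q"] by (simp add: homogeneous_poly_iff)

lemma homogeneous_poly_mult:
  "homogeneous_poly D1 p \<Longrightarrow> homogeneous_poly D2 q \<Longrightarrow> homogeneous_poly (D1 + D2) (p * q)"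
  unfolding homogeneous_poly_iff using keys_mult[of p q] by (force simp: monomial_degree_add)

lemma homogeneous_poly_sum:
  "(\<And>i. i \<in> A \<Longrightarrow> homogeneous_poly D (f i)) \<Longrightarrow> homogeneous_poly D (\<Sum>i\<in>A. f i)"
  by (induction A rule: infinite_finite_induct)
     (auto simp: homogeneous_poly_zero homogeneous_poly_add)

lemma homogeneous_poly_prod:
  "finite A \<Longrightarrow> (\<And>i. i \<in> A \<Longrightarrow> homogeneous_poly (D i) (f i)) \<Longrightarrow>
   homogeneous_poly (\<Sum>i\<in>A. D i) (\<Prod>i\<in>A. f i)"
  by (induction A rule: finite_induct) (auto simp: homogeneous_poly_one homogeneous_poly_mult)

lemma homogeneous_poly_pconst_mult_pvar: "homogeneous_poly 1 (pconst c * pvar x)"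
  by (auto simp: homogeneous_poly_iff monomial_degree_def pconst_def pvar_def mult_single
           split: if_splits)

lemma homogeneous_poly_det:
  fixes A :: "'v rpoly mat"
  assumes A: "A \<in> carrier_mat r r"
    and entries: "\<And>p q. p < r \<Longrightarrow> q < r \<Longrightarrow> homogeneous_poly e (A $$ (p, q))"
  shows "homogeneous_poly (r * e) (det A)"
  unfolding det_def'[OF A]
proof (rule homogeneous_poly_sum)
  fix \<sigma> assume "\<sigma> \<in> {\<sigma>. \<sigma> permutes {0..<r}}"
  then have "homogeneous_poly (\<Sum>i\<in>{0..<r}. e) (\<Prod>i\<in>{0..<r}. A $$ (i, \<sigma> i))"
    by (intro homogeneous_poly_prod entries) (auto simp: permutes_in_image)
  from homogeneous_poly_mult[OF homogeneous_poly_of_int this]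
  show "homogeneous_poly (r * e) (signof \<sigma> * (\<Prod>i\<in>{0..<r}. A $$ (i, \<sigma> i)))"
    by simp
qed

section \<open>Determinants of forest-shaped row perturbations\<close>

lemma det_mat_eq_sum_permutes:
  "det (mat r r (\<lambda>(p, q). b p q)) =
     (\<Sum>\<sigma> | \<sigma> permutes {0..<r}. signof \<sigma> * (\<Prod>i\<in>{0..<r}. b i (\<sigma> i)))"
  by (subst det_def'[of _ r]) (auto intro!: sum.cong prod.cong simp: permutes_in_image)

lemma det_mat_rows_add_expand:
  fixes a :: "nat \<Rightarrow> nat \<Rightarrow> 'a :: comm_ring_1"
  shows "det (mat r r (\<lambda>(p, q). c p * a p q + e p * a (f p) q)) =
    (\<Sum>X\<in>Pow {0..<r}. (\<Prod>i\<in>X. e i) * (\<Prod>i\<in>{0..<r} - X. c i) *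
        det (mat r r (\<lambda>(p, q). a (if p \<in> X then f p else p) q)))"
proof -
  let ?A = "{0..<r}"
  let ?w = "\<lambda>X. (\<Prod>i\<in>X. e i) * (\<Prod>i\<in>?A - X. c i)"
  let ?g = "\<lambda>X p. if p \<in> X then f p else p"
  have rows_expand: "(\<Prod>i\<in>?A. c i * a i (\<sigma> i) + e i * a (f i) (\<sigma> i)) =
      (\<Sum>X\<in>Pow ?A. ?w X * (\<Prod>i\<in>?A. a (?g X i) (\<sigma> i)))" for \<sigma>
  proof -
    have "(\<Prod>i\<in>?A. c i * a i (\<sigma> i) + e i * a (f i) (\<sigma> i)) =
        (\<Sum>X\<in>Pow ?A. (\<Prod>i\<in>X. e i * a (f i) (\<sigma> i)) * (\<Prod>i\<in>?A - X. c i * a i (\<sigma> i)))"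
      by (subst prod_add[symmetric]) (simp_all add: add.commute)
    also have "\<dots> = (\<Sum>X\<in>Pow ?A. ?w X * (\<Prod>i\<in>?A. a (?g X i) (\<sigma> i)))"
    proof (rule sum.cong[OF refl])
      fix X assume "X \<in> Pow ?A"
      then have "(\<Prod>i\<in>?A. a (?g X i) (\<sigma> i)) =
          (\<Prod>i\<in>X. a (?g X i) (\<sigma> i)) * (\<Prod>i\<in>?A - X. a (?g X i) (\<sigma> i))"
        by (simp add: prod.subset_diff mult.commute)
      also have "\<dots> = (\<Prod>i\<in>X. a (f i) (\<sigma> i)) * (\<Prod>i\<in>?A - X. a i (\<sigma> i))"
        by (intro arg_cong2[where f = "(*)"] prod.cong) auto
      finally show "(\<Prod>i\<in>X. e i * a (f i) (\<sigma> i)) * (\<Prod>i\<in>?A - X. c i * a i (\<sigma> i)) =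
          ?w X * (\<Prod>i\<in>?A. a (?g X i) (\<sigma> i))"
        by (simp add: prod.distrib ac_simps)
    qed
    finally show ?thesis .
  qed
  have "det (mat r r (\<lambda>(p, q). c p * a p q + e p * a (f p) q)) =
      (\<Sum>\<sigma> | \<sigma> permutes ?A. \<Sum>X\<in>Pow ?A. ?w X * (signof \<sigma> * (\<Prod>i\<in>?A. a (?g X i) (\<sigma> i))))"
    by (simp add: det_mat_eq_sum_permutes rows_expand sum_distrib_left mult.left_commute)
  also have "\<dots> = (\<Sum>X\<in>Pow ?A. \<Sum>\<sigma> | \<sigma> permutes ?A. ?w X * (signof \<sigma> * (\<Prod>i\<in>?A. a (?g X i) (\<sigma> i))))"
    by (rule sum.swap)
  also have "\<dots> = (\<Sum>X\<in>Pow ?A. ?w X * det (mat r r (\<lambda>(p, q). a (?g X p) q)))"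
    by (simp add: det_mat_eq_sum_permutes sum_distrib_left)
  finally show ?thesis .
qed

lemma partial_forest_map_not_inj_on:
  fixes f :: "nat \<Rightarrow> nat"
  assumes f_into: "\<forall>p<r. f p < r"
    and only_fixed_cycles: "\<forall>p<r. \<forall>i\<ge>1. (f ^^ i) p = p \<longrightarrow> f p = p"
    and X: "X \<subseteq> {0..<r}" "X \<noteq> {}" and no_fixed: "\<forall>q\<in>X. f q \<noteq> q"
  shows "\<not> inj_on (\<lambda>q. if q \<in> X then f q else q) {0..<r}"
proof
  define g where "g = (\<lambda>q. if q \<in> X then f q else q)"
  assume "inj_on (\<lambda>q. if q \<in> X then f q else q) {0..<r}"
  then have inj: "inj_on g {0..<r}"
    by (simp add: g_def)
  have g_into: "g ` {0..<r} \<subseteq> {0..<r}"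
    using f_into X by (auto simp: g_def)
  have X_closed: "f q \<in> X" if "q \<in> X" for q
  proof (rule ccontr)
    assume "f q \<notin> X"
    then have "g (f q) = g q"
      using that by (simp add: g_def)
    moreover have "q \<in> {0..<r}" "f q \<in> {0..<r}"
      using X f_into that by auto
    ultimately have "f q = q"
      by (meson inj inj_onD)
    then show False
      using no_fixed that by simp
  qed
  have "bij_betw g {0..<r} {0..<r}"
    using inj g_into by (simp add: bij_betw_def endo_inj_surj)
  then have "g permutes {0..<r}"
    by (rule bij_imp_permutes) (use X in \<open>auto simp: g_def\<close>)
  then obtain N where N: "g ^^ N = id" "N > 0"
    using permutation_is_nilpotent permutation_permutes by blast
  obtain p where p: "p \<in> X"
    using X by auto
  have "(g ^^ m) p = (f ^^ m) p \<and> (f ^^ m) p \<in> X" for m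
    by (induction m) (auto simp: g_def p X_closed)
  then have "(f ^^ N) p = p"
    using N by (metis id_apply)
  moreover have "p < r"
    using p X by auto
  ultimately have "f p = p"
    using only_fixed_cycles N by (metis One_nat_def Suc_leI)
  then show False
    using no_fixed p by blast
qed

lemma det_mat_rows_add_forest:
  fixes a :: "nat \<Rightarrow> nat \<Rightarrow> 'a :: comm_ring_1"
  assumes f_into: "\<forall>p<r. f p < r"
    and only_fixed_cycles: "\<forall>p<r. \<forall>i\<ge>1. (f ^^ i) p = p \<longrightarrow> f p = p"
    and e_fixed: "\<forall>p<r. f p = p \<longrightarrow> e p = 0"
  shows "det (mat r r (\<lambda>(p, q). c p * a p q + e p * a (f p) q)) =
    (\<Prod>i\<in>{0..<r}. c i) * det (mat r r (\<lambda>(p, q). a p q))"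
proof -
  let ?A = "{0..<r}"
  let ?T = "\<lambda>X. (\<Prod>i\<in>X. e i) * (\<Prod>i\<in>?A - X. c i) *
      det (mat r r (\<lambda>(p, q). a (if p \<in> X then f p else p) q))"
  have vanish: "?T X = 0" if X: "X \<in> Pow ?A - {{}}" for X
  proof (cases "\<exists>p\<in>X. f p = p")
    case True
    then obtain p where p: "p \<in> X" "f p = p"
      by blast
    with X e_fixed have "e p = 0"
      by auto
    with p X have "(\<Prod>i\<in>X. e i) = 0"
      by (intro prod_zero) (auto intro: finite_subset)
    then show ?thesis by simp
  next
    case False
    then have "\<not> inj_on (\<lambda>q. if q \<in> X then f q else q) ?A"
      using partial_forest_map_not_inj_on[OF f_into only_fixed_cycles] X by auto
    then obtain i j where "i \<in> ?A" "j \<in> ?A" "i \<noteq> j"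
        "(if i \<in> X then f i else i) = (if j \<in> X then f j else j)"
      unfolding inj_on_def by blast
    then have "det (mat r r (\<lambda>(p, q). a (if p \<in> X then f p else p) q)) = 0"
      by (intro det_identical_rows[of _ r i j]) (auto intro!: eq_vecI)
    then show ?thesis by simp
  qed
  have "det (mat r r (\<lambda>(p, q). c p * a p q + e p * a (f p) q)) = (\<Sum>X\<in>Pow ?A. ?T X)"
    by (rule det_mat_rows_add_expand)
  also have "\<dots> = ?T {} + (\<Sum>X\<in>Pow ?A - {{}}. ?T X)"
    by (subst sum.remove[of _ "{}"]) auto
  also have "(\<Sum>X\<in>Pow ?A - {{}}. ?T X) = 0"
    using vanish by (intro sum.neutral) blast
  finally show ?thesis
    by simp
qed

section \<open>Coefficients of the attention polynomial\<close>

abbreviation single1 :: "'a \<Rightarrow> 'a \<Rightarrow>\<^sub>0 nat" where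
  "single1 x \<equiv> Poly_Mapping.single x 1"

lemma lookup_single1_sum3:
  "Poly_Mapping.lookup (single1 a + single1 b + single1 c) x = count {#a, b, c#} x"
  by (simp add: lookup_add lookup_single when_def)

lemma single1_sum3_eq_iff:
  "single1 a + single1 b + single1 c = single1 a' + single1 b' + single1 c' \<longleftrightarrow>
   {#a, b, c#} = {#a', b', c'#}"
  by (metis lookup_single1_sum3 multiset_eqI poly_mapping_eqI)

lemma phi_poly_expand:
  "phi_poly a d t Q K v j =
    (\<Sum>n'<t. \<Sum>u'<d. \<Sum>b'<d. \<Sum>k<d.
       Poly_Mapping.single (single1 (u', n') + (single1 (b', j) + single1 (k, n')))
         (v k * Amat a Q K u' b'))"
  unfolding phi_poly_def pvar_def pconst_def
  by (simp add: sum_distrib_left sum_distrib_right mult_single ac_simps)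

lemma phi_poly_coeff:
  assumes "n \<noteq> j" "n < t" "u < d" "w < d" "b < d"
  shows "Poly_Mapping.lookup (phi_poly a d t Q K v j) (single1 (u, n) + single1 (w, n) + single1 (b, j)) =
    (if u = w then v u * Amat a Q K u b else v u * Amat a Q K w b + v w * Amat a Q K u b)"
proof -
  let ?M = "single1 (u, n) + single1 (w, n) + single1 (b, j)"
  let ?S = "{..<t} \<times> {..<d} \<times> {..<d} \<times> {..<d}"
  let ?P = "\<lambda>(n', u', b', k). single1 (u', n') + (single1 (b', j) + single1 (k, n')) = ?M"
  have matches: "?P (n', u', b', k) \<longleftrightarrow>
      n' = n \<and> b' = b \<and> (k = u \<and> u' = w \<or> k = w \<and> u' = u)" for n' u' b' k
  proof -
    have "?P (n', u', b', k) \<longleftrightarrow> single1 (k, n') + single1 (u', n') + single1 (b', j) = ?M"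
      by (simp add: ac_simps)
    also have "\<dots> \<longleftrightarrow> {#(k, n'), (u', n'), (b', j)#} = {#(u, n), (w, n), (b, j)#}"
      by (rule single1_sum3_eq_iff)
    finally show ?thesis
      using \<open>n \<noteq> j\<close> by (auto simp: add_eq_conv_ex)
  qed
  have "Poly_Mapping.lookup (phi_poly a d t Q K v j) ?M =
      (\<Sum>n'<t. \<Sum>u'<d. \<Sum>b'<d. \<Sum>k<d.
         if ?P (n', u', b', k) then v k * Amat a Q K u' b' else 0)"
    unfolding phi_poly_expand by (simp add: lookup_sum lookup_single when_def)
  also have "\<dots> = (\<Sum>x\<in>?S. if ?P x then (case x of (n', u', b', k) \<Rightarrow> v k * Amat a Q K u' b') else 0)"
    by (simp add: sum.cartesian_product) (auto intro!: sum.cong split: prod.splits)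
  also have "\<dots> = (\<Sum>(n', u', b', k)\<in>{x\<in>?S. ?P x}. v k * Amat a Q K u' b')"
    by (simp add: sum.inter_filter)
  also have "{x\<in>?S. ?P x} = {(n, w, b, u), (n, u, b, w)}"
    using matches assms by auto
  finally show ?thesis
    by (auto simp: mult.commute)
qed

lemma outside_col_single1_sum3:
  assumes "n \<noteq> j"
  shows "outside_col j (single1 (u, n) + single1 (w, n) + single1 (b, j)) = {#u, w#}"
proof -
  let ?M = "single1 (u, n) + single1 (w, n) + single1 (b, j)"
  have "Poly_Mapping.keys ?M = {(u, n), (w, n), (b, j)}"
    unfolding set_eq_iff in_keys_iff lookup_single1_sum3 by auto
  then have "{x\<in>Poly_Mapping.keys ?M. snd x \<noteq> j} = {(u, n), (w, n)}"
    using assms by auto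
  then show ?thesis
    unfolding outside_col_def lookup_single1_sum3 using assms
    by (cases "u = w") (simp_all add: numeral_2_eq_2)
qed

lemma omega_mult_mu_ycoord:
  assumes "j < t" "n < t" "n \<noteq> j" "u < d" "w < d" "b < d"
  shows "omega u w * mu a d t Q K v (ycoord n j u w b) =
    v u * Amat a Q K w b + (if u = w then 0 else v w * Amat a Q K u b)"
  unfolding mu_def ycoord_def prod.case outside_col_single1_sum3[OF \<open>n \<noteq> j\<close>]
    phi_poly_coeff[OF \<open>n \<noteq> j\<close> \<open>n < t\<close> \<open>u < d\<close> \<open>w < d\<close> \<open>b < d\<close>]
  using \<open>j < t\<close> by (simp add: omega_def permutations_of_multiset_doubleton)

section \<open>The determinants \<open>D\<^sub>\<alpha>\<^sub>,\<^sub>L\<close>\<close>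

definition Dpoly :: "nat \<Rightarrow> (nat \<Rightarrow> nat) \<Rightarrow> nat \<Rightarrow> nat \<Rightarrow> (nat \<Rightarrow> nat) \<Rightarrow> (nat \<Rightarrow> nat) \<Rightarrow> coord rpoly"
  where "Dpoly r k n j f L = det (mat r r (\<lambda>(p, q).
    pconst (omega (k (f p)) (k p)) * pvar (ycoord n j (k (f p)) (k p) (L q))))"

lemma peval_Dpoly: "peval (Dpoly r k n j f L) y = Dval r k n j f L y"
  unfolding Dpoly_def Dval_def peval.hom_det[symmetric]
  by (intro arg_cong[where f = det] eq_matI) (auto simp: peval_mult)

lemma homogeneous_poly_Dpoly: "homogeneous_poly r (Dpoly r k n j f L)"
proof -
  have "homogeneous_poly (r * 1) (Dpoly r k n j f L)"
    unfolding Dpoly_def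
    by (rule homogeneous_poly_det)
       (simp_all only: mat_carrier index_mat prod.case homogeneous_poly_pconst_mult_pvar)
  then show ?thesis by simp
qed

lemma prod_comp_eq_prod_power_card_fibres:
  assumes "finite A" "finite B" "f ` A \<subseteq> B"
  shows "(\<Prod>i\<in>A. h (f i)) = (\<Prod>m\<in>B. h m ^ card {i\<in>A. f i = m})"
proof -
  have "(\<Prod>i\<in>A. h (f i)) = (\<Prod>m\<in>B. \<Prod>i\<in>{i\<in>A. f i = m}. h (f i))"
    using assms by (rule prod.group[symmetric])
  also have "\<dots> = (\<Prod>m\<in>B. h m ^ card {i\<in>A. f i = m})"
    by (intro prod.cong refl) simp
  finally show ?thesis .
qed

lemma Dval_mu:
  assumes "j < t" "n < t" "n \<noteq> j"
    and k: "inj_on k {..<r}" "\<forall>p<r. k p < d"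
    and f: "admissible_f r \<alpha> f" and L: "distinct_tuple d r L"
  shows "Dval r k n j f L (mu a d t Q K v) =
    (\<Prod>m<r. v (k m) ^ \<alpha> m) * det (mat r r (\<lambda>(p, q). Amat a Q K (k p) (L q)))"
proof -
  have f_into: "\<forall>p<r. f p < r" and only_fixed_cycles: "\<forall>p<r. \<forall>i\<ge>1. (f ^^ i) p = p \<longrightarrow> f p = p"
    using f unfolding admissible_f_def by auto
  let ?c = "\<lambda>p. v (k (f p))"
  let ?e = "\<lambda>p. if f p = p then 0 else v (k p)"
  let ?A = "\<lambda>p q. Amat a Q K (k p) (L q)"
  have "mat r r (\<lambda>(p, q). omega (k (f p)) (k p) * mu a d t Q K v (ycoord n j (k (f p)) (k p) (L q)))
      = mat r r (\<lambda>(p, q). ?c p * ?A p q + ?e p * ?A (f p) q)"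
  proof (rule cong_mat)
    fix p q assume "p < r" "q < r"
    moreover from \<open>p < r\<close> have "k (f p) = k p \<longleftrightarrow> f p = p"
      using k f_into by (auto dest: inj_onD)
    ultimately show "(\<lambda>(p, q). omega (k (f p)) (k p) * mu a d t Q K v (ycoord n j (k (f p)) (k p) (L q))) (p, q)
        = (\<lambda>(p, q). ?c p * ?A p q + ?e p * ?A (f p) q) (p, q)"
      using omega_mult_mu_ycoord[OF \<open>j < t\<close> \<open>n < t\<close> \<open>n \<noteq> j\<close>] k f_into L
      by (auto simp: distinct_tuple_def)
  qed simp_all
  then have "Dval r k n j f L (mu a d t Q K v) = det (mat r r (\<lambda>(p, q). ?c p * ?A p q + ?e p * ?A (f p) q))"
    unfolding Dval_def by simp
  also have "\<dots> = (\<Prod>i\<in>{0..<r}. ?c i) * det (mat r r (\<lambda>(p, q). ?A p q))"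
    by (rule det_mat_rows_add_forest[OF f_into only_fixed_cycles]) simp
  also have "(\<Prod>i\<in>{0..<r}. ?c i) = (\<Prod>m<r. v (k m) ^ card {i\<in>{..<r}. f i = m})"
    using f_into by (subst prod_comp_eq_prod_power_card_fibres) (auto simp: atLeast0LessThan)
  also have "\<dots> = (\<Prod>m<r. v (k m) ^ \<alpha> m)"
    using f unfolding admissible_f_def by simp
  finally show ?thesis .
qed

lemma multi_index_add:
  "multi_index r s \<alpha> \<Longrightarrow> multi_index r s' \<beta> \<Longrightarrow> multi_index r (s + s') (\<lambda>m. \<alpha> m + \<beta> m)"
  unfolding multi_index_def by (simp add: sum.distrib)

lemma CK_mu_rank_one:
  assumes "j < t" "n < t" "n \<noteq> j"
    and k: "inj_on k {..<r}" "\<forall>p<r. k p < d"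
    and F: "\<forall>\<alpha>. multi_index r r \<alpha> \<longrightarrow> admissible_f r \<alpha> (F \<alpha>)"
    and "1 \<le> r" "multi_index r 1 \<beta>" "multi_index r (r - 1) \<gamma>" "distinct_tuple d r L"
  shows "CK r k n j F \<beta> \<gamma> L (mu a d t Q K v) =
    (\<Prod>m<r. v (k m) ^ \<beta> m) * ((\<Prod>m<r. v (k m) ^ \<gamma> m) * det (mat r r (\<lambda>(p, q). Amat a Q K (k p) (L q))))"
proof -
  have "multi_index r r (\<lambda>m. \<beta> m + \<gamma> m)"
    using multi_index_add[OF \<open>multi_index r 1 \<beta>\<close> \<open>multi_index r (r - 1) \<gamma>\<close>] \<open>1 \<le> r\<close> by simp
  with F have "admissible_f r (\<lambda>m. \<beta> m + \<gamma> m) (F (\<lambda>m. \<beta> m + \<gamma> m))"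
    by blast
  then show ?thesis
    unfolding CK_def using assms
    by (simp add: Dval_mu power_add prod.distrib mult.assoc)
qed

theorem mainTheorem14:
  fixes a d t r j n :: nat
    and k :: "nat \<Rightarrow> nat"
    and F :: "(nat \<Rightarrow> nat) \<Rightarrow> nat \<Rightarrow> nat"
    and \<beta>1 \<beta>2 \<gamma>1 \<gamma>2 L1 L2 :: "nat \<Rightarrow> nat"
  assumes "t > 1" and "j < t" and "n < t" and "n \<noteq> j"
    and "2 \<le> r" and "r \<le> min a d"
    and "inj_on k {..<r}" and "\<forall>p<r. k p < d"
    and "\<forall>\<alpha>. multi_index r r \<alpha> \<longrightarrow> admissible_f r \<alpha> (F \<alpha>)"
    and "multi_index r 1 \<beta>1" and "multi_index r 1 \<beta>2"
    and "multi_index r (r - 1) \<gamma>1" and "multi_index r (r - 1) \<gamma>2"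
    and "distinct_tuple d r L1" and "distinct_tuple d r L2"
  shows "(\<exists>P :: coord rpoly. homogeneous_poly (2 * r) P \<and>
            (\<forall>y. peval P y = CK r k n j F \<beta>1 \<gamma>1 L1 y * CK r k n j F \<beta>2 \<gamma>2 L2 y
                            - CK r k n j F \<beta>1 \<gamma>2 L2 y * CK r k n j F \<beta>2 \<gamma>1 L1 y))
         \<and> (\<forall>y\<in>attention_variety a d t.
              CK r k n j F \<beta>1 \<gamma>1 L1 y * CK r k n j F \<beta>2 \<gamma>2 L2 y
              - CK r k n j F \<beta>1 \<gamma>2 L2 y * CK r k n j F \<beta>2 \<gamma>1 L1 y = 0)"
proof -
  define minor where "minor y = CK r k n j F \<beta>1 \<gamma>1 L1 y * CK r k n j F \<beta>2 \<gamma>2 L2 y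
                            - CK r k n j F \<beta>1 \<gamma>2 L2 y * CK r k n j F \<beta>2 \<gamma>1 L1 y" for y
  define D where "D \<beta> \<gamma> L = Dpoly r k n j (F (\<lambda>m. \<beta> m + \<gamma> m)) L" for \<beta> \<gamma> L :: "nat \<Rightarrow> nat"
  define P where "P = D \<beta>1 \<gamma>1 L1 * D \<beta>2 \<gamma>2 L2 - D \<beta>1 \<gamma>2 L2 * D \<beta>2 \<gamma>1 L1"
  have peval_P: "peval P y = minor y" for y
    by (simp add: P_def D_def minor_def CK_def peval.hom_minus peval_mult peval_Dpoly)
  have "homogeneous_poly (r + r) P"
    unfolding P_def D_def
    by (intro homogeneous_poly_diff homogeneous_poly_mult homogeneous_poly_Dpoly)
  then have homogeneous: "homogeneous_poly (2 * r) P"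
    by (simp add: mult_2)
  have vanish_mu: "minor (mu a d t Q K v) = 0" for Q K v
    unfolding minor_def using assms
    by (simp add: CK_mu_rank_one)
  have "minor y = 0" if "y \<in> attention_variety a d t" for y
  proof -
    from that have "(\<forall>z\<in>{mu a d t Q K v | Q K v. True}. peval P z = 0) \<longrightarrow> peval P y = 0"
      unfolding attention_variety_def zariski_closure_def by blast
    then show ?thesis
      using vanish_mu by (auto simp: peval_P)
  qed
  with homogeneous peval_P show ?thesis
    unfolding minor_def by blast
qed

end
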